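(* Let $\mathcal{G}$ be a connected undirected graph with vertex set partitioned into generator nodes $\mathcal{V}_G$ ($n_g$ nodes) and load nodes $\mathcal{V}_L$ ($n_\ell\ge1$ nodes), $m$ edges, incidence matrix $B=\begin{bmatrix}B_G\\ B_L\end{bmatrix}$ partitioned accordingly, and $\Gamma$ an $m\times m$ positive definite diagonal matrix. Let $M,A$ be $n_g\times n_g$ positive definite diagonal matrices. Define $L_S=B_G\Gamma B_G^T-B_G\Gamma B_L^T(B_L\Gamma B_L^T)^{-1}B_L\Gamma B_G^T$, $\hat p=B_G\Gamma B_L^T(B_L\Gamma B_L^T)^{-1}p^\ast$, and $B_S=B_G(I-\Gamma B_L^T(B_L\Gamma B_L^T)^{-1}B_L)$. Let $L_S=\hat B\hat\Gamma\hat B^T$ be a decomposition where $\hat B$ is the incidence matrix of a graph $\hat{\mathcal{G}}$ on $\mathcal{V}_G$ and $\hat\Gamma$ a positive diagonal weight matrix. For given $u$ and $p^\ast$, let $\theta=\mathrm{col}(\theta_G,\theta_L)$ satisfy the differential algebraic equation $$\begin{bmatrix}M\ddot\theta_G+A\dot\theta_G\\ 0\end{bmatrix}=-\begin{bmatrix}B_G\Gamma B_G^T& B_G\Gamma B_L^T\\ B_L\Gamma B_G^T& B_L\Gamma B_L^T\end{bmatrix}\begin{bmatrix}\theta_G\\ \theta_L\end{bmatrix}+\begin{bmatrix}u\\ p^\ast\end{bmatrix}.$$ Then: (i) $\theta_G$ solves $M\ddot\theta_G=-A\dot\theta_G-L_S\theta_G+u-\hat p$; (ii) $(\eta,\omega_G,\omega_L)$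 with $\eta=B^T\theta$, $\omega_G=\dot\theta_G$, $\omega_L=\dot\theta_L$ solves $\dot\eta=B^T\omega$ (with $\omega=\mathrm{col}(\omega_G,\omega_L)$), $M\dot\omega_G=-A\omega_G-B_G\Gamma\eta+u$, $0=-B_L\Gamma\eta+p^\ast$; (iii) $(\hat\eta,\omega_G)$ with $\hat\eta=\hat B^T\theta_G$ and $\omega_G=\dot\theta_G$ solves $\dot{\hat\eta}=\hat B^T\omega_G$, $M\dot\omega_G=-A\omega_G-\hat B\hat\Gamma\hat\eta+u-\hat p$; (iv) $(\eta_S,\omega_G)$ with $\eta_S=B_S^T\theta_G$ and $\omega_G=\dot\theta_G$ solves $\dot\eta_S=B_S^T\omega_G$, $M\dot\omega_G=-A\omega_G-B_S\Gamma\eta_S+u-\hat p$.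
   Context: $\mathrm{col}(Y_1,Y_2)$ denotes the vertically stacked matrix $[Y_1^T\ Y_2^T]^T$. The incidence matrix has entries $+1$ (tail), $-1$ (head), $0$ otherwise, for an arbitrary orientation of edges. $L_S$ is a Laplacian matrix of a graph on $\mathcal{V}_G$, so a decomposition $L_S=\hat B\hat\Gamma\hat B^T$ exists. $B_S$ is called the projected incidence matrix. *)

theory Defs
  imports "HOL-Analysis.Analysis"
begin

definition incidence :: "('e::finite \<Rightarrow> 'v::finite) \<Rightarrow> ('e \<Rightarrow> 'v) \<Rightarrow> real^'e^'v" where
  "incidence src tgt = (\<chi> v e. if v = src e then 1 else if v = tgt e then -1 else 0)"

definition loopless :: "('e \<Rightarrow> 'v) \<Rightarrow> ('e \<Rightarrow> 'v) \<Rightarrow> bool" where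
  "loopless src tgt \<longleftrightarrow> (\<forall>e. src e \<noteq> tgt e)"

definition connected_graph :: "('e \<Rightarrow> 'v) \<Rightarrow> ('e \<Rightarrow> 'v) \<Rightarrow> bool" where
  "connected_graph src tgt \<longleftrightarrow>
     (\<forall>x y. (x, y) \<in> (\<Union>e. {(src e, tgt e), (tgt e, src e)})\<^sup>*)"

definition diag_mat :: "('n::finite \<Rightarrow> real) \<Rightarrow> real^'n^'n" where
  "diag_mat d = (\<chi> i j. if i = j then d i else 0)"

end

theory Submission
  imports Defs
begin

text \<open>Kron reduction. With \<open>\<theta>\<^sub>G = 0\<close> the quadratic form of \<open>B\<^sub>L \<Gamma> B\<^sub>L\<^sup>T\<close> is the sum over
  the edges of \<open>\<gamma>\<^sub>e\<close> times the squared angle difference between tail and head, which by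
  connectedness vanishes only for \<open>\<theta>\<^sub>L = 0\<close>. So this grounded Laplacian is invertible, the load
  equations determine \<open>\<theta>\<^sub>L\<close> as an affine function of \<open>\<theta>\<^sub>G\<close> (hence differentiable), and
  substituting it turns the generator equations into the Schur complement \<open>L\<^sub>S\<close> with the
  injection \<open>phat\<close>. The projected incidence matrix \<open>B\<^sub>S = B\<^sub>G P\<close> yields edge flows
  \<open>\<Gamma> P\<^sup>T x\<close> that balance at every load node, and this gives \<open>B\<^sub>S \<Gamma> B\<^sub>S\<^sup>T = L\<^sub>S\<close>.\<close>

lemma matrix_inv_right:
  fixes K :: "real^'n^'n"
  assumes "invertible K"
  shows "K ** matrix_inv K = mat 1"
  using someI_ex[OF assms[unfolded invertible_def]] unfolding matrix_inv_def by auto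

lemma matrix_inv_left:
  fixes K :: "real^'n^'n"
  assumes "invertible K"
  shows "matrix_inv K ** K = mat 1"
  using someI_ex[OF assms[unfolded invertible_def]] unfolding matrix_inv_def by auto

lemma transpose_diff: "transpose (A - B) = transpose A - transpose (B::'a::ab_group_add^'n^'m)"
  by (simp add: transpose_def vec_eq_iff)

lemma transpose_matrix_inv_symmetric:
  fixes K :: "real^'n^'n"
  assumes "invertible K" and "transpose K = K"
  shows "transpose (matrix_inv K) = matrix_inv K"
proof -
  have left_inv: "transpose (matrix_inv K) ** K = mat 1"
    by (metis assms matrix_inv_right matrix_transpose_mul transpose_mat)
  have "transpose (matrix_inv K) = (transpose (matrix_inv K) ** K) ** matrix_inv K"
    by (metis assms(1) matrix_inv_right matrix_mul_assoc matrix_mul_rid)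
  then show ?thesis
    by (simp add: left_inv)
qed

lemma has_vector_derivative_matrix_vector_mult:
  fixes A :: "real^'n^'m"
  shows "(g has_vector_derivative g') F \<Longrightarrow> ((\<lambda>x. A *v g x) has_vector_derivative A *v g') F"
  by (rule bounded_linear.has_vector_derivative[OF matrix_vector_mul_bounded_linear])

lemma has_vector_derivative_affine_matrix:
  fixes K :: "real^'m^'n" and C :: "real^'k^'m"
  assumes "(x has_vector_derivative x') F"
  shows "((\<lambda>t. K *v (p - C *v x t)) has_vector_derivative - (K *v (C *v x'))) F"
proof -
  have "((\<lambda>t. p - C *v x t) has_vector_derivative 0 - C *v x') F"
    by (intro has_vector_derivative_diff has_vector_derivative_const
        has_vector_derivative_matrix_vector_mult assms)
  then have "((\<lambda>t. K *v (p - C *v x t)) has_vector_derivative K *v (0 - C *v x')) F"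
    by (rule has_vector_derivative_matrix_vector_mult)
  then show ?thesis
    unfolding matrix_vector_mult_diff_distrib matrix_vector_mult_0_right unfolding diff_0 .
qed

lemma transpose_diag_mat: "transpose (diag_mat d) = diag_mat d"
  by (simp add: diag_mat_def transpose_def vec_eq_iff)

lemma inner_diag_mat: "(w::real^'n) \<bullet> (diag_mat d *v w) = (\<Sum>e\<in>UNIV. d e * (w $ e)\<^sup>2)"
proof -
  have "\<And>i. (\<Sum>j\<in>UNIV. (if i = j then d i else 0) * w $ j) = d i * w $ i"
    by (simp add: if_distrib[of "\<lambda>x. x * _"] cong: if_cong)
  then show ?thesis
    by (simp add: diag_mat_def inner_vec_def matrix_vector_mult_def power2_eq_square
        mult.assoc mult.left_commute)
qed

lemma transpose_incidence_mult_nth: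
  assumes "loopless src tgt"
  shows "(transpose (incidence src tgt) *v y) $ e = y $ src e - y $ tgt e"
proof -
  have "src e \<noteq> tgt e"
    using assms by (simp add: loopless_def)
  then have "(transpose (incidence src tgt) *v y) $ e =
      (\<Sum>v\<in>UNIV. (if v = src e then y $ v else 0) + (if v = tgt e then - (y $ v) else 0))"
    by (auto simp: incidence_def transpose_def matrix_vector_mult_def intro!: sum.cong)
  also have "\<dots> = y $ src e - y $ tgt e"
    by (simp add: sum.distrib)
  finally show ?thesis .
qed

lemma transpose_incidence_kernel_constant:
  assumes "loopless src tgt" and "connected_graph src tgt"
    and "transpose (incidence src tgt) *v y = 0"
  shows "y $ a = y $ b"
proof -
  have edge: "y $ src e = y $ tgt e" for e
    using transpose_incidence_mult_nth[OF assms(1), of y e] assms(3) by simp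
  have "(a, b) \<in> (\<Union>e. {(src e, tgt e), (tgt e, src e)})\<^sup>*"
    using assms(2) by (simp add: connected_graph_def)
  then show ?thesis
    by (induction rule: rtrancl_induct) (auto simp: edge)
qed

lemma transpose_mult_block_vector:
  fixes B :: "real^'e^('g::finite + 'l::finite)"
  shows "transpose B *v (\<chi> v. case v of Inl i \<Rightarrow> a $ i | Inr j \<Rightarrow> b $ j)
     = transpose (\<chi> i e. B $ Inl i $ e) *v a + transpose (\<chi> j e. B $ Inr j $ e) *v b"
  unfolding vec_eq_iff
  by (simp add: matrix_vector_mult_def transpose_def UNIV_Plus_UNIV[symmetric] sum.Plus
      del: UNIV_Plus_UNIV)

lemma invertible_grounded_laplacian:
  fixes src tgt :: "'e::finite \<Rightarrow> ('g::finite + 'l::finite)" and gam :: "'e \<Rightarrow> real"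
  assumes "loopless src tgt" and "connected_graph src tgt" and "\<forall>e. gam e > 0"
  defines "BL \<equiv> (\<chi> j e. incidence src tgt $ Inr j $ e)"
  shows "invertible (BL ** diag_mat gam ** transpose BL)"
  unfolding invertible_left_inverse matrix_left_invertible_ker
proof (intro allI impI)
  fix x :: "real^'l"
  assume "(BL ** diag_mat gam ** transpose BL) *v x = 0"
  define w where "w = transpose BL *v x"
  have "(\<Sum>e\<in>UNIV. gam e * (w $ e)\<^sup>2) = w \<bullet> (diag_mat gam *v w)"
    by (rule inner_diag_mat[symmetric])
  also have "\<dots> = x \<bullet> ((BL ** diag_mat gam ** transpose BL) *v x)"
    by (simp add: w_def matrix_vector_mul_assoc[symmetric] dot_lmul_matrix[symmetric])
  also have "\<dots> = 0"
    using \<open>(BL ** diag_mat gam ** transpose BL) *v x = 0\<close> by simp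
  finally have "\<forall>e\<in>UNIV. gam e * (w $ e)\<^sup>2 = 0"
    using assms(3) by (subst (asm) sum_nonneg_eq_0_iff) (auto simp: less_imp_le)
  then have "w = 0"
    using assms(3) by (simp add: vec_eq_iff) (metis less_irrefl)
  define y :: "real^('g + 'l)" where "y = (\<chi> v. case v of Inl i \<Rightarrow> (0::real^'g) $ i | Inr j \<Rightarrow> x $ j)"
  have "transpose (incidence src tgt) *v y = 0"
    unfolding y_def transpose_mult_block_vector using \<open>w = 0\<close> by (simp add: w_def BL_def)
  \<comment> \<open>Grounding: \<open>y\<close> vanishes at the generator vertex \<open>Inl undefined\<close> (types are nonempty).\<close>
  then have "y $ Inr j = y $ Inl undefined" for j
    using transpose_incidence_kernel_constant assms(1,2) by blast
  then show "x = 0"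
    by (simp add: y_def vec_eq_iff)
qed

text \<open>Matrix identities are proved by expanding into nested applications \<open>A *v (B *v x)\<close>;
  the simp rule \<open>transpose_matrix_vector\<close> must then be disabled, as it rewrites
  \<open>transpose A *v x\<close> to \<open>x v* A\<close> and breaks this normal form.\<close>

lemmas matrix_vector_expand = matrix_vector_mul_assoc[symmetric] matrix_vector_mult_diff_rdistrib
  matrix_vector_mult_diff_distrib matrix_vector_right_distrib matrix_vector_mult_add_rdistrib

lemma load_angles_eliminate:
  fixes BG :: "real^'e^'g" and BL :: "real^'e^'l" and Gam :: "real^'e^'e"
  assumes "invertible (BL ** Gam ** transpose BL)"
    and "0 = - ((BL ** Gam ** transpose BG) *v x + (BL ** Gam ** transpose BL) *v z) + p"
  shows "z = matrix_inv (BL ** Gam ** transpose BL) *v (p - (BL ** Gam ** transpose BG) *v x)"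
proof -
  have "(BL ** Gam ** transpose BL) *v z = p - (BL ** Gam ** transpose BG) *v x"
    using assms(2) by (simp add: algebra_simps)
  then show ?thesis
    by (metis assms(1) matrix_inv_left matrix_vector_mul_assoc matrix_vector_mul_lid)
qed

lemma schur_complement_substitute:
  fixes BG :: "real^'e^'g" and BL :: "real^'e^'l" and Gam :: "real^'e^'e" and Ki :: "real^'l^'l"
  shows "(BG ** Gam ** transpose BG) *v x
           + (BG ** Gam ** transpose BL) *v (Ki *v (p - (BL ** Gam ** transpose BG) *v x))
       = (BG ** Gam ** transpose BG - BG ** Gam ** transpose BL ** Ki ** BL ** Gam ** transpose BG) *v x
           + (BG ** Gam ** transpose BL ** Ki) *v p"
  by (simp only: matrix_vector_expand) (simp del: transpose_matrix_vector add: algebra_simps)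

lemma projected_incidence_factorization:
  fixes BG :: "real^'e^'g" and BL :: "real^'e^'l" and Gam :: "real^'e^'e"
  assumes "invertible (BL ** Gam ** transpose BL)" and "transpose Gam = Gam"
  defines "Ki \<equiv> matrix_inv (BL ** Gam ** transpose BL)"
  defines "BS \<equiv> BG ** (mat 1 - Gam ** transpose BL ** Ki ** BL)"
  shows "BS ** Gam ** transpose BS
       = BG ** Gam ** transpose BG - BG ** Gam ** transpose BL ** Ki ** BL ** Gam ** transpose BG"
  unfolding matrix_eq
proof
  fix v
  define z where "z = transpose BG *v v"
  have "transpose Ki = Ki"
    unfolding Ki_def using assms(1,2)
    by (simp add: transpose_matrix_inv_symmetric matrix_transpose_mul matrix_mul_assoc)
  then have w: "transpose BS *v v = z - transpose BL *v (Ki *v (BL *v (Gam *v z)))"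
    unfolding BS_def z_def
    by (simp only: matrix_transpose_mul transpose_diff transpose_mat assms(2) transpose_transpose
        matrix_vector_expand matrix_vector_mul_lid del: transpose_matrix_vector)
  have "(BL ** Gam ** transpose BL) *v (Ki *v q) = q" for q
    unfolding Ki_def using matrix_inv_right[OF assms(1)] by (simp add: matrix_vector_mul_assoc)
  then have balanced: "BL *v (Gam *v (transpose BS *v v)) = 0"
    unfolding w by (simp only: matrix_vector_expand) (simp del: transpose_matrix_vector)
  have "(BS ** Gam ** transpose BS) *v v = BG *v (Gam *v (transpose BS *v v))
      - BG *v (Gam *v (transpose BL *v (Ki *v (BL *v (Gam *v (transpose BS *v v))))))"
    unfolding BS_def by (simp only: matrix_vector_expand matrix_vector_mul_lid)
  also have "\<dots> = BG *v (Gam *v (transpose BS *v v))"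
    by (simp add: balanced del: transpose_matrix_vector)
  also have "\<dots> = (BG ** Gam ** transpose BG
      - BG ** Gam ** transpose BL ** Ki ** BL ** Gam ** transpose BG) *v v"
    unfolding w z_def by (simp only: matrix_vector_expand)
  finally show "(BS ** Gam ** transpose BS) *v v = (BG ** Gam ** transpose BG
      - BG ** Gam ** transpose BL ** Ki ** BL ** Gam ** transpose BG) *v v" .
qed

theorem proposition2:
  fixes src tgt :: "'e::finite \<Rightarrow> ('g::finite + 'l::finite)"
    and gam :: "'e \<Rightarrow> real"
    and mm aa :: "'g \<Rightarrow> real"
    and hsrc htgt :: "'f::finite \<Rightarrow> 'g"
    and hgam :: "'f \<Rightarrow> real"
    and u :: "real \<Rightarrow> real^'g"
    and pstar :: "real^'l"
    and I :: "real set"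
    and thG dthG ddthG :: "real \<Rightarrow> real^'g"
    and thL :: "real \<Rightarrow> real^'l"
    and B :: "real^'e^('g + 'l)" and BG :: "real^'e^'g" and BL :: "real^'e^'l"
    and Gam :: "real^'e^'e" and M A :: "real^'g^'g"
    and LS :: "real^'g^'g" and phat :: "real^'g" and BS :: "real^'e^'g"
    and Bh :: "real^'f^'g" and Gamh :: "real^'f^'f"
  assumes loopless: "loopless src tgt"
    and conn: "connected_graph src tgt"
    and gam_pos: "\<forall>e. gam e > 0"
    and mm_pos: "\<forall>i. mm i > 0"
    and aa_pos: "\<forall>i. aa i > 0"
  defines "B \<equiv> incidence src tgt"
    and "BG \<equiv> (\<chi> i e. B $ Inl i $ e)"
    and "BL \<equiv> (\<chi> j e. B $ Inr j $ e)"
    and "Gam \<equiv> diag_mat gam"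
    and "M \<equiv> diag_mat mm"
    and "A \<equiv> diag_mat aa"
    and "LS \<equiv> BG ** Gam ** transpose BG
              - BG ** Gam ** transpose BL ** matrix_inv (BL ** Gam ** transpose BL) ** BL ** Gam ** transpose BG"
    and "phat \<equiv> (BG ** Gam ** transpose BL ** matrix_inv (BL ** Gam ** transpose BL)) *v pstar"
    and "BS \<equiv> BG ** (mat 1 - Gam ** transpose BL ** matrix_inv (BL ** Gam ** transpose BL) ** BL)"
    and "Bh \<equiv> incidence hsrc htgt"
    and "Gamh \<equiv> diag_mat hgam"
  assumes hloopless: "loopless hsrc htgt"
    and hgam_pos: "\<forall>f. hgam f > 0"
    and decomp: "LS = Bh ** Gamh ** transpose Bh"
    and I_interval: "is_interval I"
    and dthG: "\<forall>t\<in>I. (thG has_vector_derivative dthG t) (at t within I)"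
    and ddthG: "\<forall>t\<in>I. (dthG has_vector_derivative ddthG t) (at t within I)"
    and dae_G: "\<forall>t\<in>I. M *v ddthG t + A *v dthG t =
                   - ((BG ** Gam ** transpose BG) *v thG t + (BG ** Gam ** transpose BL) *v thL t) + u t"
    and dae_L: "\<forall>t\<in>I. 0 =
                   - ((BL ** Gam ** transpose BG) *v thG t + (BL ** Gam ** transpose BL) *v thL t) + pstar"
  shows
    "(\<forall>t\<in>I. M *v ddthG t = - (A *v dthG t) - LS *v thG t + u t - phat)
     \<and> (let th = (\<lambda>t. \<chi> v. case v of Inl i \<Rightarrow> thG t $ i | Inr j \<Rightarrow> thL t $ j);
            eta = (\<lambda>t. transpose B *v th t)
        in \<exists>omL :: real \<Rightarrow> real^'l.
             (\<forall>t\<in>I. (thL has_vector_derivative omL t) (at t within I)) \<and>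
             (\<forall>t\<in>I.
                (eta has_vector_derivative
                   transpose B *v (\<chi> v. case v of Inl i \<Rightarrow> dthG t $ i | Inr j \<Rightarrow> omL t $ j))
                   (at t within I)
              \<and> M *v ddthG t = - (A *v dthG t) - (BG ** Gam) *v eta t + u t
              \<and> 0 = - ((BL ** Gam) *v eta t) + pstar))
     \<and> (let etah = (\<lambda>t. transpose Bh *v thG t)
        in \<forall>t\<in>I. (etah has_vector_derivative transpose Bh *v dthG t) (at t within I)
              \<and> M *v ddthG t = - (A *v dthG t) - (Bh ** Gamh) *v etah t + u t - phat)
     \<and> (let etaS = (\<lambda>t. transpose BS *v thG t)
        in \<forall>t\<in>I. (etaS has_vector_derivative transpose BS *v dthG t) (at t within I)
              \<and> M *v ddthG t = - (A *v dthG t) - (BS ** Gam) *v etaS t + u t - phat)"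
proof -
  define K where "K = BL ** Gam ** transpose BL"
  have K: "invertible K"
    unfolding K_def BL_def Gam_def B_def by (rule invertible_grounded_laplacian[OF loopless conn gam_pos])
  have thL: "thL t = matrix_inv K *v (pstar - (BL ** Gam ** transpose BG) *v thG t)" if "t \<in> I" for t
    unfolding K_def by (rule load_angles_eliminate[OF K[unfolded K_def] dae_L[rule_format, OF that]])
  have reduced: "M *v ddthG t = - (A *v dthG t) - LS *v thG t + u t - phat" if "t \<in> I" for t
  proof -
    have "M *v ddthG t + A *v dthG t = - (LS *v thG t + phat) + u t"
      using dae_G[rule_format, OF that]
      unfolding thL[OF that] schur_complement_substitute LS_def phat_def K_def .
    then show ?thesis
      by (simp add: algebra_simps)
  qed
  define omL where "omL t = - (matrix_inv K *v ((BL ** Gam ** transpose BG) *v dthG t))" for t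
  have omL: "(thL has_vector_derivative omL t) (at t within I)" if "t \<in> I" for t
    unfolding omL_def
    by (rule has_vector_derivative_transform[OF that thL
          has_vector_derivative_affine_matrix[OF dthG[rule_format, OF that]]])
  have BS: "BS ** Gam ** transpose BS = LS"
    unfolding BS_def LS_def using K unfolding K_def Gam_def
    by (rule projected_incidence_factorization) (rule transpose_diag_mat)
  have eta: "transpose B *v (\<chi> v. case v of Inl i \<Rightarrow> a $ i | Inr j \<Rightarrow> b $ j)
      = transpose BG *v a + transpose BL *v b" for a b
    unfolding BG_def BL_def by (rule transpose_mult_block_vector)
  have factor_h: "(Bh ** Gamh) *v (transpose Bh *v x) = LS *v x" for x
    by (simp only: decomp matrix_vector_mul_assoc)
  have factor_S: "(BS ** Gam) *v (transpose BS *v x) = LS *v x" for x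
    by (simp only: BS matrix_vector_mul_assoc)
  show ?thesis
    unfolding Let_def eta factor_h factor_S
    using reduced dae_G dae_L omL dthG
    by (auto intro!: exI[of _ omL] has_vector_derivative_add has_vector_derivative_matrix_vector_mult
        simp: matrix_vector_expand algebra_simps simp del: transpose_matrix_vector)
qed

end
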